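(* Let $N=[n]$, let $v:2^N\to\mathbb{R}_+$ be any monotone valuation with $v(\emptyset)=0$, and let $X$ be a maximal decision map for $v$. Let $p\in\mathbb{R}^n_+$, $S=X(p)$ and $\epsilon>0$, and define $p^\epsilon$ by $p^\epsilon_i=\max\{p_i-\frac{\epsilon}{n},0\}$ for $i\in S$ and $p^\epsilon_i=p_i$ for $i\notin S$. Then for any decision map $X'$ for $v$, the set $S^\epsilon=X'(p^\epsilon)$ satisfies $S\cap\{j:p_j>0\}\subseteq S^\epsilon\subseteq S$.
   Context: For $p\in\mathbb{R}^n_+$, $p(S)=\sum_{j\in S}p_j$ and $D(v;p)=\arg\max_{S\subseteq N}(v(S)-p(S))$. A decision map is $X:\mathbb{R}^n_+\to2^N$ with $X(p)\in D(v;p)$ for all $p$; it is maximal if for every $p$ there is no $S'\in D(v;p)$ with $X(p)\subsetneq S'$. The map $X'$ need not be maximal. *)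

theory Defs
  imports Complex_Main
begin

text \<open>The ground set N = [n] is modelled by a finite type 'a (N = UNIV, n = CARD('a)).
  Price vectors in R^n_+ are functions p :: 'a \<Rightarrow> real with all p i \<ge> 0.\<close>

definition price_sum :: "('a \<Rightarrow> real) \<Rightarrow> 'a set \<Rightarrow> real" where
  "price_sum p S = (\<Sum>j\<in>S. p j)"

definition nonneg_prices :: "('a \<Rightarrow> real) \<Rightarrow> bool" where
  "nonneg_prices p \<longleftrightarrow> (\<forall>i. 0 \<le> p i)"

definition demand :: "('a set \<Rightarrow> real) \<Rightarrow> ('a \<Rightarrow> real) \<Rightarrow> 'a set set" where
  "demand v p = {S. \<forall>T. v T - price_sum p T \<le> v S - price_sum p S}"

definition monotone_valuation :: "('a set \<Rightarrow> real) \<Rightarrow> bool" where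
  "monotone_valuation v \<longleftrightarrow> v {} = 0 \<and> (\<forall>S. 0 \<le> v S) \<and> (\<forall>S T. S \<subseteq> T \<longrightarrow> v S \<le> v T)"

definition decision_map :: "('a set \<Rightarrow> real) \<Rightarrow> (('a \<Rightarrow> real) \<Rightarrow> 'a set) \<Rightarrow> bool" where
  "decision_map v X \<longleftrightarrow> (\<forall>p. nonneg_prices p \<longrightarrow> X p \<in> demand v p)"

definition maximal_decision_map :: "('a set \<Rightarrow> real) \<Rightarrow> (('a \<Rightarrow> real) \<Rightarrow> 'a set) \<Rightarrow> bool" where
  "maximal_decision_map v X \<longleftrightarrow> decision_map v X \<and>
     (\<forall>p. nonneg_prices p \<longrightarrow> \<not> (\<exists>S' \<in> demand v p. X p \<subset> S'))"

end

theory Submission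
  imports Defs
begin

text \<open>Lowering prices only on the demanded bundle S, by d \<ge> 0, to q = p - d: optimality of
  T at q and of S at p give d(S) \<le> d(T \<inter> S), so the discount vanishes on S - T and T is
  still demanded at p. Any good of S - T that was discounted must then have been free at p, so
  S \<union> T is demanded at p as well by monotonicity, and maximality of S forces T \<subseteq> S.\<close>

lemma price_sum_diff_supported:
  fixes p q :: "'a::finite \<Rightarrow> real"
  assumes "\<And>i. i \<notin> S \<Longrightarrow> q i = p i"
  shows "price_sum p R = price_sum q R + (\<Sum>i\<in>R \<inter> S. p i - q i)"
proof -
  have "(\<Sum>i\<in>R. p i - q i) = (\<Sum>i\<in>R \<inter> S. p i - q i)"
    by (rule sum.mono_neutral_right) (auto simp: assms)
  then show ?thesis
    unfolding price_sum_def by (simp add: sum_subtractf)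
qed

lemma demand_after_discount:
  fixes v :: "'a::finite set \<Rightarrow> real"
  assumes S: "S \<in> demand v p" and T: "T \<in> demand v q"
    and discount: "\<And>i. q i \<le> p i" and supp: "\<And>i. i \<notin> S \<Longrightarrow> q i = p i"
  shows "T \<in> demand v p" and "\<forall>i \<in> S - T. q i = p i"
proof -
  define d where "d i = p i - q i" for i
  have d_nonneg: "0 \<le> d i" for i
    using discount[of i] by (simp add: d_def)
  have split: "price_sum p R = price_sum q R + sum d (R \<inter> S)" for R
    unfolding d_def by (rule price_sum_diff_supported[OF supp])
  have S_split: "sum d S = sum d (T \<inter> S) + sum d (S - T)"
    by (metis Diff_eq Int_commute finite sum.Int_Diff)
  have "v S - price_sum q S \<le> v T - price_sum q T"
    using T by (simp add: demand_def)
  moreover have "v T - price_sum p T \<le> v S - price_sum p S"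
    using S by (simp add: demand_def)
  ultimately have "sum d (S - T) \<le> 0" and T_gain: "sum d (T \<inter> S) \<le> sum d S"
    using split[of S] split[of T] S_split d_nonneg by (simp_all add: sum_nonneg)
  then have "sum d (S - T) = 0"
    by (simp add: antisym sum_nonneg d_nonneg)
  then show "\<forall>i \<in> S - T. q i = p i"
    using d_nonneg by (simp add: sum_nonneg_eq_0_iff d_def)
  have "v S - price_sum p S \<le> v T - price_sum p T"
    using \<open>v S - price_sum q S \<le> v T - price_sum q T\<close> T_gain split[of S] split[of T] by simp
  with S show "T \<in> demand v p"
    unfolding demand_def by (blast intro: order_trans)
qed

lemma demand_union_free_goods:
  fixes v :: "'a::finite set \<Rightarrow> real"
  assumes "monotone_valuation v" and "T \<in> demand v p" and "\<And>i. i \<in> S - T \<Longrightarrow> p i = 0"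
  shows "S \<union> T \<in> demand v p"
proof -
  have "price_sum p (S \<union> T) = price_sum p T + price_sum p (S - T)"
    unfolding price_sum_def by (metis Diff_disjoint Un_Diff_cancel2 finite sum.union_disjoint Un_commute)
  also have "price_sum p (S - T) = 0"
    unfolding price_sum_def using assms(3) by simp
  finally have "price_sum p (S \<union> T) = price_sum p T" by simp
  moreover have "v T \<le> v (S \<union> T)"
    using assms(1) by (simp add: monotone_valuation_def)
  ultimately have "v T - price_sum p T \<le> v (S \<union> T) - price_sum p (S \<union> T)"
    by simp
  with assms(2) show ?thesis
    unfolding demand_def by (blast intro: order_trans)
qed

lemma maximal_decision_map_union_demand:
  assumes "maximal_decision_map v X" and "nonneg_prices p" and "X p \<union> T \<in> demand v p"
  shows "T \<subseteq> X p"
  using assms unfolding maximal_decision_map_def by blast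

theorem mainTheorem18:
  fixes v :: "'a::finite set \<Rightarrow> real"
    and X X' :: "('a \<Rightarrow> real) \<Rightarrow> 'a set"
    and p :: "'a \<Rightarrow> real"
    and \<epsilon> :: real
  assumes "monotone_valuation v"
    and "maximal_decision_map v X"
    and "decision_map v X'"
    and "nonneg_prices p"
    and "\<epsilon> > 0"
  shows "let S = X p;
             p\<epsilon> = (\<lambda>i. if i \<in> S then max (p i - \<epsilon> / real (card (UNIV :: 'a set))) 0 else p i)
         in S \<inter> {j. p j > 0} \<subseteq> X' p\<epsilon> \<and> X' p\<epsilon> \<subseteq> S"
proof -
  define S where "S = X p"
  define q where "q = (\<lambda>i. if i \<in> S then max (p i - \<epsilon> / real (card (UNIV :: 'a set))) 0 else p i)"
  have p_nonneg: "0 \<le> p i" for i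
    using assms(4) by (simp add: nonneg_prices_def)
  have "\<epsilon> / real (card (UNIV :: 'a set)) > 0"
    using assms(5) by (simp add: card_gt_0_iff)
  then have strict: "q i < p i" if "i \<in> S" "p i > 0" for i
    using that by (simp add: q_def)
  have "nonneg_prices q"
    by (simp add: nonneg_prices_def q_def p_nonneg)
  then have T: "X' q \<in> demand v q"
    using assms(3) by (simp add: decision_map_def)
  have S: "S \<in> demand v p"
    using assms(2,4) by (simp add: maximal_decision_map_def decision_map_def S_def)
  have below: "q i \<le> p i" for i
    using \<open>\<epsilon> / _ > 0\<close> p_nonneg by (simp add: q_def)
  have unchanged: "q i = p i" if "i \<notin> S" for i
    using that by (simp add: q_def)
  note discount = demand_after_discount[OF S T below unchanged]
  have free: "p i = 0" if "i \<in> S - X' q" for i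
    using discount(2) that strict[of i] p_nonneg[of i] by fastforce
  have "X' q \<subseteq> S"
    using maximal_decision_map_union_demand[OF assms(2,4)]
      demand_union_free_goods[OF assms(1) discount(1) free] by (simp add: S_def)
  moreover have "S \<inter> {j. p j > 0} \<subseteq> X' q"
    using free by fastforce
  ultimately show ?thesis
    by (simp add: Let_def S_def[symmetric] q_def[symmetric])
qed

end
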